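(* For every $0<\alpha<1$, the Marcinkiewicz space $M_\alpha$ of measurable functions $f$ on $(0,\infty)$ with $\|f\|_{M_\alpha}=\sup_{t>0}t^{\alpha-1}\int_0^t f^*(u)\,du<\infty$ does not belong to the class $\mathcal X$.
   Context: $f^*$ denotes the nonincreasing rearrangement. A pair $(f,g)$ satisfies the NP condition if there is $t_0>0$ with $f^*(t)\ge g^*(t)$ for $t\le t_0$ and $f^*(t)\le g^*(t)$ for $t\ge t_0$. $\mathcal X$ is the class of all rearrangement invariant spaces $X$ on $(0,\infty)$ such that for every pair $(f,g)$ with $f,g\in X$ satisfying the NP condition and $\|f\|_X\ge\|g\|_X$, one has $\|f^*\chi_{(0,s)}\|_X\ge\|g^*\chi_{(0,s)}\|_X$ for all $s>0$. *)

theory Defs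
  imports "HOL-Analysis.Analysis"
begin

text \<open>Functions on (0,\<infinity>) are represented as functions real \<Rightarrow> real whose values
  on (-\<infinity>,0] are ignored; the underlying measure is Lebesgue measure on (0,\<infinity>).\<close>

definition distrib_fun :: "(real \<Rightarrow> real) \<Rightarrow> ennreal \<Rightarrow> ennreal" where
  "distrib_fun f s = emeasure lborel {x::real. 0 < x \<and> s < ennreal \<bar>f x\<bar>}"

definition rearr :: "(real \<Rightarrow> real) \<Rightarrow> real \<Rightarrow> ennreal" where
  "rearr f t = Inf {s::ennreal. distrib_fun f s \<le> ennreal t}"

definition marc_norm :: "real \<Rightarrow> (real \<Rightarrow> real) \<Rightarrow> ennreal" where
  "marc_norm \<alpha> f = (SUP t\<in>{0<..}. ennreal (t powr (\<alpha> - 1)) *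
      (\<integral>\<^sup>+ u\<in>{0<..<t}. rearr f u \<partial>lborel))"

definition marc_space :: "real \<Rightarrow> (real \<Rightarrow> real) set" where
  "marc_space \<alpha> = {f. f \<in> borel_measurable lborel \<and> marc_norm \<alpha> f < \<infinity>}"

definition NP_cond :: "(real \<Rightarrow> real) \<Rightarrow> (real \<Rightarrow> real) \<Rightarrow> bool" where
  "NP_cond f g \<longleftrightarrow> (\<exists>t0>0. (\<forall>t. 0 < t \<and> t \<le> t0 \<longrightarrow> rearr g t \<le> rearr f t)
                          \<and> (\<forall>t. t0 \<le> t \<longrightarrow> rearr f t \<le> rearr g t))"

definition rearr_cut :: "(real \<Rightarrow> real) \<Rightarrow> real \<Rightarrow> real \<Rightarrow> real" where
  "rearr_cut f s = (\<lambda>t. if 0 < t \<and> t < s then enn2real (rearr f t) else 0)"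

definition classX_prop :: "(real \<Rightarrow> real) set \<Rightarrow> ((real \<Rightarrow> real) \<Rightarrow> ennreal) \<Rightarrow> bool" where
  "classX_prop X nrm \<longleftrightarrow>
     (\<forall>f g. f \<in> X \<and> g \<in> X \<and> NP_cond f g \<and> nrm g \<le> nrm f \<longrightarrow>
        (\<forall>s>0. nrm (rearr_cut g s) \<le> nrm (rearr_cut f s)))"

end

(* Let g = 1 on (0,1) and g(u) = (1-\<alpha>) u powr (-\<alpha>) on [1,\<infinity>), and let f agree with g
   except that f = 1-\<alpha> on [1/4,1). Both are nonincreasing and right-continuous, hence equal
   to their own rearrangements, and (f,g) satisfies the NP condition with t0 = 1/8.
   The primitive of g is t on (0,1] and t powr (1-\<alpha>) afterwards, so the norm of g is at most 1;
   the primitive of f is t powr (1-\<alpha>) - 3\<alpha>/4 for t \<ge> 1, so the norm of f is 1, but only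
   in the limit t \<rightarrow> \<infinity>. Cutting at s = 1 removes the tail that carries the norm of f: the norm
   of f^* \<chi>(0,1) is below 1, while that of g^* \<chi>(0,1) is still 1, attained at t = 1. *)

theory Submission
  imports Defs
begin

text \<open>The last clause is right-continuity, stated in the form needed for a nonincreasing function.\<close>

definition nonincreasing_rcont :: "(real \<Rightarrow> real) \<Rightarrow> bool" where
  "nonincreasing_rcont h \<longleftrightarrow> h \<in> borel_measurable borel
     \<and> (\<forall>x y. 0 < x \<longrightarrow> x \<le> y \<longrightarrow> h y \<le> h x)
     \<and> (\<forall>x>0. 0 \<le> h x)
     \<and> (\<forall>t>0. \<forall>s<h t. \<exists>x>t. s < h x)"

lemma nonincreasing_rcontI:
  assumes "h \<in> borel_measurable borel"
    and "\<And>x y. 0 < x \<Longrightarrow> x \<le> y \<Longrightarrow> h y \<le> h x"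
    and "\<And>x. 0 < x \<Longrightarrow> 0 \<le> h x"
    and "\<And>t s. 0 < t \<Longrightarrow> s < h t \<Longrightarrow> \<exists>x>t. s < h x"
  shows "nonincreasing_rcont h"
  using assms unfolding nonincreasing_rcont_def by blast

lemma rearr_eq_if_nonincreasing_rcont:
  assumes h: "nonincreasing_rcont h" and t: "0 < t"
  shows "rearr h t = ennreal (h t)"
proof -
  have meas: "h \<in> borel_measurable borel"
    and mono: "\<And>x y. 0 < x \<Longrightarrow> x \<le> y \<Longrightarrow> h y \<le> h x"
    and nn: "\<And>x. 0 < x \<Longrightarrow> 0 \<le> h x"
    and rc: "\<And>s. s < h t \<Longrightarrow> \<exists>x>t. s < h x"
    using h t unfolding nonincreasing_rcont_def by auto
  have "distrib_fun h (ennreal (h t)) \<le> ennreal t"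
  proof -
    have "x \<le> t" if "0 < x" "ennreal (h t) < ennreal \<bar>h x\<bar>" for x
    proof (rule ccontr)
      assume "\<not> x \<le> t"
      with that show False
        using mono[of t x] nn[of x] t by (auto simp: ennreal_less_iff)
    qed
    hence "{x. 0 < x \<and> ennreal (h t) < ennreal \<bar>h x\<bar>} \<subseteq> {0<..t}" by auto
    hence "distrib_fun h (ennreal (h t)) \<le> emeasure lborel {0<..t}"
      unfolding distrib_fun_def by (intro emeasure_mono) auto
    thus ?thesis using t by simp
  qed
  moreover have "ennreal (h t) \<le> s" if s: "distrib_fun h s \<le> ennreal t" for s
  proof (rule ccontr)
    assume "\<not> ennreal (h t) \<le> s"
    then obtain r where r: "s = ennreal r" "0 \<le> r" "r < h t"
      by (metis ennreal_cases ennreal_less_iff ennreal_less_top not_le order.strict_trans top.not_eq_extremum)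
    obtain x where x: "t < x" "r < h x" using rc r by auto
    have "{0<..x} \<subseteq> {y. 0 < y \<and> s < ennreal \<bar>h y\<bar>}"
      using mono[of _ x] x r by (force simp: ennreal_less_iff)
    moreover have "{y. 0 < y \<and> s < ennreal \<bar>h y\<bar>} \<in> sets lborel"
      using meas by measurable
    ultimately have "emeasure lborel {0<..x} \<le> distrib_fun h s"
      unfolding distrib_fun_def by (intro emeasure_mono)
    also note s
    finally show False using x t by (simp add: ennreal_le_iff)
  qed
  ultimately show ?thesis
    unfolding rearr_def by (intro antisym Inf_lower Inf_greatest) auto
qed

lemma nonincreasing_rcont_cut:
  assumes h: "nonincreasing_rcont h"
  shows "nonincreasing_rcont (\<lambda>t. if 0 < t \<and> t < s then h t else 0)" (is "nonincreasing_rcont ?c")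
proof (rule nonincreasing_rcontI)
  have mono: "\<And>x y. 0 < x \<Longrightarrow> x \<le> y \<Longrightarrow> h y \<le> h x"
    and nn: "\<And>x. 0 < x \<Longrightarrow> 0 \<le> h x"
    and rc: "\<And>t r. 0 < t \<Longrightarrow> r < h t \<Longrightarrow> \<exists>x>t. r < h x"
    using h unfolding nonincreasing_rcont_def by auto
  have "h \<in> borel_measurable borel"
    using h unfolding nonincreasing_rcont_def by blast
  thus "?c \<in> borel_measurable borel" by measurable
  show "?c y \<le> ?c x" if "0 < x" "x \<le> y" for x y
    using that mono[OF that] nn[of x] nn[of y] by auto
  show "0 \<le> ?c x" if "0 < x" for x
    using that nn by auto
  show "\<exists>x>t. r < ?c x" if t: "0 < t" and r: "r < ?c t" for t r
  proof (cases "t < s")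
    case True
    with r rc t obtain x where x: "t < x" "r < h x" by auto
    define y where "y = min x ((t + s) / 2)"
    have y: "t < y" "y < s" "y \<le> x" using x True by (auto simp: y_def min_def)
    hence "h x \<le> h y" using mono[of y x] t by simp
    thus ?thesis using x y t by (intro exI[of _ y]) auto
  next
    case False
    thus ?thesis using r by (intro exI[of _ "t + 1"]) auto
  qed
qed

lemma rearr_cut_eq_if_nonincreasing_rcont:
  assumes "nonincreasing_rcont h"
  shows "rearr_cut h s = (\<lambda>t. if 0 < t \<and> t < s then h t else 0)"
  using assms rearr_eq_if_nonincreasing_rcont[OF assms]
  unfolding rearr_cut_def nonincreasing_rcont_def by (auto simp: fun_eq_iff)

lemma nn_integral_rearr_eq_integral:
  assumes h: "nonincreasing_rcont h" and I: "(h has_integral I) {0..t}"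
  shows "(\<integral>\<^sup>+ u\<in>{0<..<t}. rearr h u \<partial>lborel) = ennreal I"
proof -
  have "(\<integral>\<^sup>+ u\<in>{0<..<t}. rearr h u \<partial>lborel)
      = (\<integral>\<^sup>+ u. ennreal (h u) * indicator {0<..<t} u \<partial>lborel)"
    by (intro nn_integral_cong) (auto simp: rearr_eq_if_nonincreasing_rcont[OF h] indicator_def)
  also have "\<dots> = ennreal I"
  proof (rule nn_integral_has_integral_lebesgue')
    show "(h has_integral I) {0<..<t}" using I has_integral_Icc_iff_Ioo by blast
  qed (use h in \<open>auto simp: nonincreasing_rcont_def\<close>)
  finally show ?thesis .
qed

lemma marc_norm_eq_SUP:
  assumes h: "nonincreasing_rcont h" and \<Phi>: "\<And>t. 0 < t \<Longrightarrow> (h has_integral \<Phi> t) {0..t}"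
  shows "marc_norm \<alpha> h = (SUP t\<in>{0<..}. ennreal (t powr (\<alpha> - 1) * \<Phi> t))"
  unfolding marc_norm_def
proof (rule SUP_cong)
  fix t :: real assume "t \<in> {0<..}"
  hence t: "0 < t" by simp
  have "(h has_integral \<Phi> t) {0<..<t}"
    using \<Phi>[OF t] by (simp add: has_integral_Icc_iff_Ioo)
  hence "0 \<le> \<Phi> t"
    by (rule has_integral_nonneg) (use h in \<open>simp add: nonincreasing_rcont_def\<close>)
  thus "ennreal (t powr (\<alpha> - 1)) * (\<integral>\<^sup>+ u\<in>{0<..<t}. rearr h u \<partial>lborel)
      = ennreal (t powr (\<alpha> - 1) * \<Phi> t)"
    unfolding nn_integral_rearr_eq_integral[OF h \<Phi>[OF t]] by (simp add: ennreal_mult')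
qed (rule refl)

lemma has_integral_cut:
  fixes h :: "real \<Rightarrow> real"
  assumes I: "\<And>t. 0 < t \<Longrightarrow> (h has_integral \<Phi> t) {0..t}" and t: "0 < t" and s: "0 < s"
  shows "((\<lambda>u. if 0 < u \<and> u < s then h u else 0) has_integral \<Phi> (min t s)) {0..t}"
    (is "(?c has_integral _) _")
proof -
  have cut: "(?c has_integral \<Phi> r) {0..r}" if "0 < r" "r \<le> s" for r
  proof -
    have "(h has_integral \<Phi> r) {0<..<r}"
      using I[OF \<open>0 < r\<close>] by (simp add: has_integral_Icc_iff_Ioo)
    hence "(?c has_integral \<Phi> r) {0<..<r}"
      by (rule has_integral_eq[rotated]) (use that in auto)
    thus ?thesis by (simp add: has_integral_Icc_iff_Ioo)
  qed
  show ?thesis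
  proof (cases "t \<le> s")
    case True
    thus ?thesis using cut[OF t] by simp
  next
    case False
    have "(?c has_integral 0) {s..t}"
      by (rule has_integral_is_0) auto
    hence "(?c has_integral \<Phi> s + 0) {0..t}"
      using False s by (intro has_integral_combine[OF _ _ cut[OF s order.refl]]) auto
    thus ?thesis using False by simp
  qed
qed

lemma marc_norm_rearr_cut_eq_SUP:
  assumes h: "nonincreasing_rcont h" and \<Phi>: "\<And>t. 0 < t \<Longrightarrow> (h has_integral \<Phi> t) {0..t}"
    and s: "0 < s"
  shows "marc_norm \<alpha> (rearr_cut h s) = (SUP t\<in>{0<..}. ennreal (t powr (\<alpha> - 1) * \<Phi> (min t s)))"
  unfolding rearr_cut_eq_if_nonincreasing_rcont[OF h]
  by (rule marc_norm_eq_SUP[OF nonincreasing_rcont_cut[OF h] has_integral_cut[OF \<Phi> _ s]])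

lemma exists_gt_less_if_continuous_at_right:
  fixes k :: "real \<Rightarrow> real"
  assumes "continuous (at_right t) k" and "s < k t"
  shows "\<exists>x>t. s < k x"
proof -
  have "eventually (\<lambda>x. t < x \<and> s < k x) (at_right t)"
    using assms order_tendstoD(1)[of k "k t" "at_right t" s]
    by (auto simp: continuous_within eventually_at_right_less intro: eventually_conj)
  thus ?thesis
    using eventually_happens trivial_limit_at_right_real by blast
qed

lemma has_integral_const_on_Ioo:
  fixes h :: "real \<Rightarrow> real"
  assumes "a \<le> b" and "\<And>x. x \<in> {a<..<b} \<Longrightarrow> h x = c"
  shows "(h has_integral c * (b - a)) {a..b}"
proof -
  have "((\<lambda>_. c) has_integral c * (b - a)) {a<..<b}"
    using has_integral_const_real[of c a b] assms(1) by (simp add: has_integral_Icc_iff_Ioo mult.commute)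
  hence "(h has_integral c * (b - a)) {a<..<b}"
    by (rule has_integral_eq[rotated]) (use assms(2) in auto)
  thus ?thesis by (simp add: has_integral_Icc_iff_Ioo)
qed

lemma has_integral_scaled_neg_powr_on_Ioo:
  fixes h :: "real \<Rightarrow> real"
  assumes "0 < a" "a \<le> b" and "\<And>x. x \<in> {a<..<b} \<Longrightarrow> h x = (1 - \<alpha>) * x powr (-\<alpha>)"
  shows "(h has_integral (b powr (1 - \<alpha>) - a powr (1 - \<alpha>))) {a..b}"
proof (rule fundamental_theorem_of_calculus_interior_strong[of "{}"])
  fix x assume x: "x \<in> {a<..<b} - {}"
  have "((\<lambda>u. u powr (1 - \<alpha>)) has_real_derivative (1 - \<alpha>) * x powr (1 - \<alpha> - 1)) (at x)"
    using x assms(1) by (auto intro!: derivative_eq_intros)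
  thus "((\<lambda>u. u powr (1 - \<alpha>)) has_vector_derivative h x) (at x)"
    using x assms(3) by (simp add: has_real_derivative_iff_has_vector_derivative[symmetric])
qed (use assms in \<open>auto intro!: continuous_intros\<close>)

definition g_fun :: "real \<Rightarrow> real \<Rightarrow> real" where
  "g_fun \<alpha> u = (if u < 1 then 1 else (1 - \<alpha>) * u powr (-\<alpha>))"

definition f_fun :: "real \<Rightarrow> real \<Rightarrow> real" where
  "f_fun \<alpha> u = (if u < 1/4 then 1 else if u < 1 then 1 - \<alpha> else (1 - \<alpha>) * u powr (-\<alpha>))"

definition g_prim :: "real \<Rightarrow> real \<Rightarrow> real" where
  "g_prim \<alpha> t = (if t \<le> 1 then t else t powr (1 - \<alpha>))"

definition f_prim :: "real \<Rightarrow> real \<Rightarrow> real" where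
  "f_prim \<alpha> t = (if t \<le> 1/4 then t else if t \<le> 1 then 1/4 + (1 - \<alpha>) * (t - 1/4)
     else t powr (1 - \<alpha>) - 3 * \<alpha> / 4)"

lemma g_fun_has_integral:
  assumes "0 < t"
  shows "(g_fun \<alpha> has_integral g_prim \<alpha> t) {0..t}"
proof (cases "t \<le> 1")
  case True
  have "(g_fun \<alpha> has_integral 1 * (t - 0)) {0..t}"
    by (rule has_integral_const_on_Ioo) (use True assms in \<open>auto simp: g_fun_def\<close>)
  thus ?thesis using True by (simp add: g_prim_def)
next
  case False
  have "(g_fun \<alpha> has_integral 1 * (1 - 0)) {0..1}"
    by (rule has_integral_const_on_Ioo) (auto simp: g_fun_def)
  moreover have "(g_fun \<alpha> has_integral (t powr (1 - \<alpha>) - 1 powr (1 - \<alpha>))) {1..t}"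
    by (rule has_integral_scaled_neg_powr_on_Ioo) (use False in \<open>auto simp: g_fun_def\<close>)
  ultimately have "(g_fun \<alpha> has_integral 1 * (1 - 0) + (t powr (1 - \<alpha>) - 1 powr (1 - \<alpha>))) {0..t}"
    using False by (intro has_integral_combine) auto
  thus ?thesis using False by (simp add: g_prim_def)
qed

lemma f_fun_has_integral:
  assumes "0 < t"
  shows "(f_fun \<alpha> has_integral f_prim \<alpha> t) {0..t}"
proof -
  have head: "(f_fun \<alpha> has_integral 1 * (r - 0)) {0..r}" if "0 \<le> r" "r \<le> 1/4" for r
    by (rule has_integral_const_on_Ioo) (use that in \<open>auto simp: f_fun_def\<close>)
  have "(f_fun \<alpha> has_integral (1 - \<alpha>) * (r - 1/4)) {1/4..r}" if "1/4 \<le> r" "r \<le> 1" for r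
    by (rule has_integral_const_on_Ioo) (use that in \<open>auto simp: f_fun_def\<close>)
  hence middle: "(f_fun \<alpha> has_integral 1 * (1/4 - 0) + (1 - \<alpha>) * (r - 1/4)) {0..r}"
    if "1/4 \<le> r" "r \<le> 1" for r
    using that head[of "1/4"] by (intro has_integral_combine) auto
  consider "t \<le> 1/4" | "1/4 < t" "t \<le> 1" | "1 < t" by linarith
  thus ?thesis
  proof cases
    case 3
    have "(f_fun \<alpha> has_integral (t powr (1 - \<alpha>) - 1 powr (1 - \<alpha>))) {1..t}"
      by (rule has_integral_scaled_neg_powr_on_Ioo) (use 3 in \<open>auto simp: f_fun_def\<close>)
    with 3 have "(f_fun \<alpha> has_integral (1 * (1/4 - 0) + (1 - \<alpha>) * (1 - 1/4))
        + (t powr (1 - \<alpha>) - 1 powr (1 - \<alpha>))) {0..t}"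
      by (intro has_integral_combine[OF _ _ middle[of 1]]) auto
    thus ?thesis using 3 by (simp add: f_prim_def field_simps)
  qed (use assms head middle in \<open>auto simp: f_prim_def\<close>)
qed

lemma exists_gt_less_tail:
  fixes \<alpha> :: real
  assumes "0 < t" and "s < (1 - \<alpha>) * t powr (-\<alpha>)"
  shows "\<exists>x>t. s < (1 - \<alpha>) * x powr (-\<alpha>)"
proof -
  have "continuous (at t) (\<lambda>x. (1 - \<alpha>) * x powr (-\<alpha>))"
    using assms(1) by (intro continuous_intros) simp
  hence "continuous (at_right t) (\<lambda>x. (1 - \<alpha>) * x powr (-\<alpha>))"
    by (rule continuous_at_imp_continuous_within)
  from exists_gt_less_if_continuous_at_right[OF this] assms(2) show ?thesis by simp
qed

lemma tail_antimono:
  fixes \<alpha> :: real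
  assumes "0 < \<alpha>" "\<alpha> < 1" "0 < x" "x \<le> y"
  shows "(1 - \<alpha>) * y powr (-\<alpha>) \<le> (1 - \<alpha>) * x powr (-\<alpha>)"
  using assms by (intro mult_left_mono powr_mono2') auto

lemma tail_le:
  fixes \<alpha> :: real
  assumes "0 < \<alpha>" "\<alpha> < 1" "1 \<le> y"
  shows "(1 - \<alpha>) * y powr (-\<alpha>) \<le> 1 - \<alpha>"
  using tail_antimono[of \<alpha> 1 y] assms by simp

lemma nonincreasing_rcont_g_fun:
  assumes "0 < \<alpha>" "\<alpha> < 1"
  shows "nonincreasing_rcont (g_fun \<alpha>)"
proof (rule nonincreasing_rcontI)
  show "g_fun \<alpha> \<in> borel_measurable borel"
    unfolding g_fun_def by measurable
  show "g_fun \<alpha> y \<le> g_fun \<alpha> x" if "0 < x" "x \<le> y" for x y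
  proof (cases "y < 1")
    case False
    have ty: "(1 - \<alpha>) * y powr (-\<alpha>) \<le> 1 - \<alpha>"
      using tail_le[OF assms] False by simp
    have "(1 - \<alpha>) * y powr (-\<alpha>) \<le> g_fun \<alpha> x"
    proof (cases "x < 1")
      case True
      thus ?thesis using ty assms(1) unfolding g_fun_def by simp
    next
      case False
      thus ?thesis using tail_antimono[OF assms that] unfolding g_fun_def by simp
    qed
    thus ?thesis using False by (simp add: g_fun_def)
  qed (use that in \<open>simp add: g_fun_def\<close>)
  show "0 \<le> g_fun \<alpha> x" for x
    using assms by (auto simp: g_fun_def)
  show "\<exists>x>t. s < g_fun \<alpha> x" if "0 < t" "s < g_fun \<alpha> t" for t s
  proof (cases "t < 1")
    case True
    thus ?thesis using that by (intro exI[of _ "(t + 1) / 2"]) (auto simp: g_fun_def)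
  next
    case False
    with that obtain x where "t < x" "s < (1 - \<alpha>) * x powr (-\<alpha>)"
      using exists_gt_less_tail[of t s \<alpha>] by (auto simp: g_fun_def)
    thus ?thesis using False by (intro exI[of _ x]) (auto simp: g_fun_def)
  qed
qed

lemma nonincreasing_rcont_f_fun:
  assumes "0 < \<alpha>" "\<alpha> < 1"
  shows "nonincreasing_rcont (f_fun \<alpha>)"
proof (rule nonincreasing_rcontI)
  show "f_fun \<alpha> \<in> borel_measurable borel"
    unfolding f_fun_def by measurable
  show "f_fun \<alpha> y \<le> f_fun \<alpha> x" if "0 < x" "x \<le> y" for x y
  proof (cases "y < 1")
    case False
    have ty: "(1 - \<alpha>) * y powr (-\<alpha>) \<le> 1 - \<alpha>"
      using tail_le[OF assms] False by simp
    have "(1 - \<alpha>) * y powr (-\<alpha>) \<le> f_fun \<alpha> x"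
    proof (cases "x < 1")
      case True
      thus ?thesis using ty assms(1) unfolding f_fun_def by simp
    next
      case False
      thus ?thesis using tail_antimono[OF assms that] unfolding f_fun_def by simp
    qed
    thus ?thesis using False by (simp add: f_fun_def)
  qed (use that assms in \<open>simp add: f_fun_def\<close>)
  show "0 \<le> f_fun \<alpha> x" for x
    using assms by (auto simp: f_fun_def)
  show "\<exists>x>t. s < f_fun \<alpha> x" if "0 < t" "s < f_fun \<alpha> t" for t s
  proof -
    consider "t < 1/4" | "1/4 \<le> t" "t < 1" | "1 \<le> t" by linarith
    thus ?thesis
    proof cases
      case 1
      thus ?thesis using that by (intro exI[of _ "(t + 1/4) / 2"]) (auto simp: f_fun_def)
    next
      case 2
      thus ?thesis using that by (intro exI[of _ "(t + 1) / 2"]) (auto simp: f_fun_def)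
    next
      case 3
      with that obtain x where "t < x" "s < (1 - \<alpha>) * x powr (-\<alpha>)"
        using exists_gt_less_tail[of t s \<alpha>] by (auto simp: f_fun_def)
      thus ?thesis using 3 by (intro exI[of _ x]) (auto simp: f_fun_def)
    qed
  qed
qed

lemma marc_space_memI:
  assumes "nonincreasing_rcont h" and "marc_norm \<alpha> h < \<infinity>"
  shows "h \<in> marc_space \<alpha>"
  using assms unfolding marc_space_def nonincreasing_rcont_def by (simp add: measurable_lborel1)

lemma powr_diff_one_mult_self:
  fixes t :: real
  assumes "0 < t"
  shows "t powr (\<alpha> - 1) * t = t powr \<alpha>"
  using powr_add[of t "\<alpha> - 1" 1] assms by simp

lemma powr_diff_one_mult_powr_one_diff:
  fixes t :: real
  assumes "0 < t"
  shows "t powr (\<alpha> - 1) * t powr (1 - \<alpha>) = 1"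
  using assms by (simp add: powr_add[symmetric])

lemma f_prim_le_self:
  assumes "0 < \<alpha>" "\<alpha> < 1" "t \<le> 1"
  shows "f_prim \<alpha> t \<le> t"
proof (cases "t \<le> 1/4")
  case False
  have "(1 - \<alpha>) * (t - 1/4) \<le> t - 1/4"
    using mult_right_mono[of "1 - \<alpha>" 1 "t - 1/4"] assms False by simp
  moreover have "f_prim \<alpha> t = 1/4 + (1 - \<alpha>) * (t - 1/4)"
    using False assms(3) by (simp add: f_prim_def)
  ultimately show ?thesis by linarith
qed (simp add: f_prim_def)

lemma marc_norm_g_fun_eq:
  assumes "0 < \<alpha>" "\<alpha> < 1"
  shows "marc_norm \<alpha> (g_fun \<alpha>) = (SUP t\<in>{0<..}. ennreal (t powr (\<alpha> - 1) * g_prim \<alpha> t))"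
  by (rule marc_norm_eq_SUP[OF nonincreasing_rcont_g_fun[OF assms]]) (rule g_fun_has_integral)

lemma marc_norm_f_fun_eq:
  assumes "0 < \<alpha>" "\<alpha> < 1"
  shows "marc_norm \<alpha> (f_fun \<alpha>) = (SUP t\<in>{0<..}. ennreal (t powr (\<alpha> - 1) * f_prim \<alpha> t))"
  by (rule marc_norm_eq_SUP[OF nonincreasing_rcont_f_fun[OF assms]]) (rule f_fun_has_integral)

lemma marc_norm_g_fun_le:
  assumes "0 < \<alpha>" "\<alpha> < 1"
  shows "marc_norm \<alpha> (g_fun \<alpha>) \<le> 1"
  unfolding marc_norm_g_fun_eq[OF assms]
proof (rule SUP_least)
  fix t :: real assume "t \<in> {0<..}"
  hence t: "0 < t" by simp
  have "t powr (\<alpha> - 1) * g_prim \<alpha> t \<le> 1"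
  proof (cases "t \<le> 1")
    case True
    thus ?thesis using t assms powr_mono2[of \<alpha> t 1]
      by (simp add: g_prim_def powr_diff_one_mult_self)
  qed (use t in \<open>simp add: g_prim_def powr_diff_one_mult_powr_one_diff\<close>)
  thus "ennreal (t powr (\<alpha> - 1) * g_prim \<alpha> t) \<le> 1" by (simp add: ennreal_le_1)
qed

lemma marc_norm_f_fun_le:
  assumes "0 < \<alpha>" "\<alpha> < 1"
  shows "marc_norm \<alpha> (f_fun \<alpha>) \<le> 1"
  unfolding marc_norm_f_fun_eq[OF assms]
proof (rule SUP_least)
  fix t :: real assume "t \<in> {0<..}"
  hence t: "0 < t" by simp
  have "t powr (\<alpha> - 1) * f_prim \<alpha> t \<le> 1"
  proof (cases "t \<le> 1")
    case True
    have "t powr (\<alpha> - 1) * f_prim \<alpha> t \<le> t powr (\<alpha> - 1) * t"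
      using f_prim_le_self[OF assms True] by (intro mult_left_mono) auto
    also have "\<dots> \<le> 1"
      using t True assms powr_mono2[of \<alpha> t 1] by (simp add: powr_diff_one_mult_self)
    finally show ?thesis .
  next
    case False
    have "t powr (\<alpha> - 1) * f_prim \<alpha> t = 1 - 3 * \<alpha> / 4 * t powr (\<alpha> - 1)"
      using False t powr_diff_one_mult_powr_one_diff[OF t, of \<alpha>]
      by (simp add: f_prim_def algebra_simps)
    thus ?thesis using assms by simp
  qed
  thus "ennreal (t powr (\<alpha> - 1) * f_prim \<alpha> t) \<le> 1" by (simp add: ennreal_le_1)
qed

lemma f_prim_ratio_tendsto:
  assumes "\<alpha> < 1"
  shows "((\<lambda>t. t powr (\<alpha> - 1) * f_prim \<alpha> t) \<longlongrightarrow> 1) at_top"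
proof -
  have "((\<lambda>t. 1 - 3 * \<alpha> / 4 * t powr (\<alpha> - 1)) \<longlongrightarrow> 1 - 3 * \<alpha> / 4 * 0) at_top"
    using assms by (intro tendsto_intros tendsto_neg_powr filterlim_ident) auto
  moreover have "eventually (\<lambda>t. 1 - 3 * \<alpha> / 4 * t powr (\<alpha> - 1) = t powr (\<alpha> - 1) * f_prim \<alpha> t) at_top"
    using eventually_gt_at_top[of 1]
  proof eventually_elim
    case (elim t)
    thus ?case using powr_diff_one_mult_powr_one_diff[of t \<alpha>]
      by (simp add: f_prim_def algebra_simps)
  qed
  ultimately show ?thesis by (simp add: tendsto_cong)
qed

lemma marc_norm_f_fun_ge:
  assumes "0 < \<alpha>" "\<alpha> < 1"
  shows "1 \<le> marc_norm \<alpha> (f_fun \<alpha>)"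
proof (rule tendsto_le[OF trivial_limit_at_top_linorder tendsto_const])
  show "((\<lambda>t. ennreal (t powr (\<alpha> - 1) * f_prim \<alpha> t)) \<longlongrightarrow> 1) at_top"
    using tendsto_ennrealI[OF f_prim_ratio_tendsto[OF assms(2)]] by simp
  show "eventually (\<lambda>t. ennreal (t powr (\<alpha> - 1) * f_prim \<alpha> t) \<le> marc_norm \<alpha> (f_fun \<alpha>)) at_top"
    using eventually_gt_at_top[of 0]
    unfolding marc_norm_f_fun_eq[OF assms]
    by eventually_elim (auto intro: SUP_upper)
qed

lemma marc_norm_rearr_cut_g_fun_ge:
  assumes "0 < \<alpha>" "\<alpha> < 1"
  shows "1 \<le> marc_norm \<alpha> (rearr_cut (g_fun \<alpha>) 1)"
proof -
  have "marc_norm \<alpha> (rearr_cut (g_fun \<alpha>) 1)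
      = (SUP t\<in>{0<..}. ennreal (t powr (\<alpha> - 1) * g_prim \<alpha> (min t 1)))"
    by (rule marc_norm_rearr_cut_eq_SUP[OF nonincreasing_rcont_g_fun[OF assms]])
      (auto intro: g_fun_has_integral)
  also have "ennreal (1 powr (\<alpha> - 1) * g_prim \<alpha> (min 1 1)) \<le> \<dots>"
    by (rule SUP_upper) simp
  finally show ?thesis by (simp add: g_prim_def)
qed

lemma f_prim_cut_ratio_le:
  assumes "0 < \<alpha>" "\<alpha> < 1" "0 < t"
  shows "t powr (\<alpha> - 1) * f_prim \<alpha> (min t 1) \<le> max ((1/2) powr \<alpha>) (1 - \<alpha>/2)"
proof -
  consider "t \<le> 1/2" | "1/2 < t" "t \<le> 1" | "1 < t" by linarith
  thus ?thesis
  proof cases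
    case 1
    have "t powr (\<alpha> - 1) * f_prim \<alpha> (min t 1) \<le> t powr (\<alpha> - 1) * t"
      using f_prim_le_self[OF assms(1,2), of t] 1 by (intro mult_left_mono) auto
    also have "\<dots> \<le> (1/2) powr \<alpha>"
      using powr_mono2[of \<alpha> t "1/2"] 1 assms by (simp add: powr_diff_one_mult_self)
    finally show ?thesis by simp
  next
    case 2
    have ta: "t powr \<alpha> \<le> 1" using powr_mono2[of \<alpha> t 1] 2 assms by simp
    have "t powr (\<alpha> - 1) = t powr \<alpha> / t" using assms(3) by (simp add: powr_diff)
    also have "\<dots> \<le> 2" using ta 2 by (simp add: field_simps)
    finally have t2: "t powr (\<alpha> - 1) \<le> 2" .
    have fp: "f_prim \<alpha> (min t 1) = \<alpha>/4 + (1 - \<alpha>) * t"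
      using 2 by (simp add: f_prim_def field_simps)
    have "t powr (\<alpha> - 1) * f_prim \<alpha> (min t 1)
        = \<alpha>/4 * t powr (\<alpha> - 1) + (1 - \<alpha>) * (t powr (\<alpha> - 1) * t)"
      unfolding fp by (simp add: algebra_simps)
    also have "\<dots> \<le> \<alpha>/4 * 2 + (1 - \<alpha>) * 1"
      using t2 ta assms(1,2) powr_diff_one_mult_self[OF assms(3)]
      by (intro add_mono mult_left_mono) auto
    finally show ?thesis by simp
  next
    case 3
    have "t powr (\<alpha> - 1) \<le> 1" using powr_mono2'[of "\<alpha> - 1" 1 t] 3 assms by simp
    moreover have "f_prim \<alpha> (min t 1) = 1 - 3 * \<alpha> / 4"
      using 3 by (simp add: f_prim_def field_simps)
    ultimately have "t powr (\<alpha> - 1) * f_prim \<alpha> (min t 1) \<le> 1 - 3 * \<alpha> / 4"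
      using mult_right_mono[of "t powr (\<alpha> - 1)" 1 "1 - 3 * \<alpha> / 4"] assms by simp
    thus ?thesis using assms(1) by (intro max.coboundedI2) linarith
  qed
qed

lemma marc_norm_rearr_cut_f_fun_less:
  assumes "0 < \<alpha>" "\<alpha> < 1"
  shows "marc_norm \<alpha> (rearr_cut (f_fun \<alpha>) 1) < 1"
proof -
  define b where "b = max ((1/2) powr \<alpha>) (1 - \<alpha>/2)"
  have "marc_norm \<alpha> (rearr_cut (f_fun \<alpha>) 1)
      = (SUP t\<in>{0<..}. ennreal (t powr (\<alpha> - 1) * f_prim \<alpha> (min t 1)))"
    by (rule marc_norm_rearr_cut_eq_SUP[OF nonincreasing_rcont_f_fun[OF assms]])
      (auto intro: f_fun_has_integral)
  also have "\<dots> \<le> ennreal b"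
    using f_prim_cut_ratio_le[OF assms] by (intro SUP_least ennreal_leI) (auto simp: b_def)
  also have "ennreal b < 1"
    using powr_less_mono2[of \<alpha> "1/2" 1] assms by (simp add: b_def ennreal_less_iff)
  finally show ?thesis .
qed

lemma NP_cond_f_fun_g_fun:
  assumes "0 < \<alpha>" "\<alpha> < 1"
  shows "NP_cond (f_fun \<alpha>) (g_fun \<alpha>)"
  unfolding NP_cond_def
proof (intro exI[of _ "1/8"] conjI allI impI)
  fix t :: real
  assume "0 < t \<and> t \<le> 1/8"
  thus "rearr (g_fun \<alpha>) t \<le> rearr (f_fun \<alpha>) t"
    using assms by (simp add: rearr_eq_if_nonincreasing_rcont nonincreasing_rcont_f_fun
        nonincreasing_rcont_g_fun f_fun_def g_fun_def)
next
  fix t :: real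
  assume t: "1/8 \<le> t"
  have "f_fun \<alpha> t \<le> g_fun \<alpha> t" using assms by (auto simp: f_fun_def g_fun_def)
  thus "rearr (f_fun \<alpha>) t \<le> rearr (g_fun \<alpha>) t"
    using assms t by (simp add: rearr_eq_if_nonincreasing_rcont nonincreasing_rcont_f_fun
        nonincreasing_rcont_g_fun ennreal_leI)
qed simp

theorem mainTheorem16:
  fixes \<alpha> :: real
  assumes "0 < \<alpha>" and "\<alpha> < 1"
  shows "\<not> classX_prop (marc_space \<alpha>) (marc_norm \<alpha>)"
proof
  assume X: "classX_prop (marc_space \<alpha>) (marc_norm \<alpha>)"
  have "marc_norm \<alpha> (f_fun \<alpha>) < \<infinity>"
    using marc_norm_f_fun_le[OF assms] by (rule order_le_less_trans) simp
  hence f: "f_fun \<alpha> \<in> marc_space \<alpha>"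
    by (rule marc_space_memI[OF nonincreasing_rcont_f_fun[OF assms]])
  have "marc_norm \<alpha> (g_fun \<alpha>) < \<infinity>"
    using marc_norm_g_fun_le[OF assms] by (rule order_le_less_trans) simp
  hence g: "g_fun \<alpha> \<in> marc_space \<alpha>"
    by (rule marc_space_memI[OF nonincreasing_rcont_g_fun[OF assms]])
  have "marc_norm \<alpha> (g_fun \<alpha>) \<le> marc_norm \<alpha> (f_fun \<alpha>)"
    using marc_norm_g_fun_le[OF assms] marc_norm_f_fun_ge[OF assms] by (rule order_trans)
  with X f g NP_cond_f_fun_g_fun[OF assms]
  have "marc_norm \<alpha> (rearr_cut (g_fun \<alpha>) 1) \<le> marc_norm \<alpha> (rearr_cut (f_fun \<alpha>) 1)"
    unfolding classX_prop_def by simp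
  thus False
    using marc_norm_rearr_cut_g_fun_ge[OF assms] marc_norm_rearr_cut_f_fun_less[OF assms] by simp
qed

end
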